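(* Let $(\mathbf F,\prec)$ be an IS-family over a finite set $V$. Let $S\in\mathbf F$ and $v\in Vis(S)\setminus S$. Then there is $S^*\in\mathbf F$ with $S^*\prec S$ such that $v\in hat(S^* )$ and $S$ is the witness of $v$ w.r.t. $S^*$.
   Context: Let $V$ be a finite set, $n=|V|$, $\mathbf F$ a family of subsets of $V$ and $\prec$ a strict partial order on $\mathbf F$; $S\preceq S'$ means $S\prec S'$ or $S=S'$. For $S\in\mathbf F$ and $v\in V$, $S$ covers $v$ if there is $S'\in\mathbf F$ with $S'\prec S$ and $v\in S'\setminus S$. $Pred(S)$ is the set of $S'\in\mathbf F$ with $S'\prec S$ such that there is no $S''\in\mathbf F$ with $S'\prec S''\prec S$. The visible set $Vis(S)$ is the set of $v\in V$ such that $v\in S'$ for some $S'\in Pred(S)$ and $v$ is not covered by any element of $Pred(S)$. For $S\in\mathbf F$ and $v\in S$, a witness of $v$ w.r.t. $S$ is a $\prec$-minimal element $S'\in\mathbf F$ with $S\prec S'$ and $v\in S\setminus S'$. $(\mathbf F,\prec)$ is an IS-family if: (SE) there is a unique element $sm(\mathbf F)\in\mathbf F$ with $sm(\mathbf F)\prec S$ for every other $S\in\mathbf F$; (SM) $S_1\prec S_2$ implies $|S_1|<|S_2|$; (SW) for every $S\in\mathbf F$ and $v\in S$ there is at most one witness of $v$ w.r.t. $S$; (TE) if $S_1\prec S_2\prec S_3$ are in $\mathbf F$ and $v\in S_1\setminus S_2$ then $v\in S_1\setminus S_3$; (LVS) for every $S\in\mathbf F$ and $S'\in Pred(S)$, $|S'|\le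 |Vis(S)|$; (DVS) for every $S\in\mathbf F$ with $S\ne sm(\mathbf F)$, $Vis(S)$ is not a subset of $S$; (EC) $sm(\mathbf F)$ can be computed in $O(n^3)$ time, for given $S\in\mathbf F$ and $v\in S$ the witness of $v$ w.r.t. $S$ can be computed (or its nonexistence reported) in $O(n^3)$ time, and $S_1\prec S_2$ can be tested in $O(|S_1|)$ time. Notation: $hat(S)=S\setminus\bigcup_{S'\prec S}S'$. *)

theory Defs
  imports Main
begin

(* A family F of subsets of V with a strict partial order prec on F.
   prec is a relation on sets; only its restriction to F matters. *)

definition covers :: "'a set set \<Rightarrow> ('a set \<Rightarrow> 'a set \<Rightarrow> bool) \<Rightarrow> 'a set \<Rightarrow> 'a \<Rightarrow> bool" where
  "covers F prec S v \<longleftrightarrow> (\<exists>S'\<in>F. prec S' S \<and> v \<in> S' - S)"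

definition Pred :: "'a set set \<Rightarrow> ('a set \<Rightarrow> 'a set \<Rightarrow> bool) \<Rightarrow> 'a set \<Rightarrow> 'a set set" where
  "Pred F prec S = {S'\<in>F. prec S' S \<and> \<not> (\<exists>S''\<in>F. prec S' S'' \<and> prec S'' S)}"

definition Vis :: "'a set \<Rightarrow> 'a set set \<Rightarrow> ('a set \<Rightarrow> 'a set \<Rightarrow> bool) \<Rightarrow> 'a set \<Rightarrow> 'a set" where
  "Vis V F prec S = {v\<in>V. (\<exists>S'\<in>Pred F prec S. v \<in> S') \<and>
                           \<not> (\<exists>S'\<in>Pred F prec S. covers F prec S' v)}"

definition is_witness :: "'a set set \<Rightarrow> ('a set \<Rightarrow> 'a set \<Rightarrow> bool) \<Rightarrow> 'a set \<Rightarrow> 'a \<Rightarrow> 'a set \<Rightarrow> bool" where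
  "is_witness F prec S v S' \<longleftrightarrow>
     S' \<in> F \<and> prec S S' \<and> v \<in> S - S' \<and>
     \<not> (\<exists>S''\<in>F. prec S S'' \<and> v \<in> S - S'' \<and> prec S'' S')"

definition hat :: "'a set set \<Rightarrow> ('a set \<Rightarrow> 'a set \<Rightarrow> bool) \<Rightarrow> 'a set \<Rightarrow> 'a set" where
  "hat F prec S = S - \<Union>{S'\<in>F. prec S' S}"

definition strict_po_on :: "'a set set \<Rightarrow> ('a set \<Rightarrow> 'a set \<Rightarrow> bool) \<Rightarrow> bool" where
  "strict_po_on F prec \<longleftrightarrow>
     (\<forall>S\<in>F. \<not> prec S S) \<and>
     (\<forall>S1\<in>F. \<forall>S2\<in>F. \<forall>S3\<in>F. prec S1 S2 \<longrightarrow> prec S2 S3 \<longrightarrow> prec S1 S3)"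

(* IS-family; the algorithmic condition (EC) is not formalized. *)
definition IS_family :: "'a set \<Rightarrow> 'a set set \<Rightarrow> ('a set \<Rightarrow> 'a set \<Rightarrow> bool) \<Rightarrow> bool" where
  "IS_family V F prec \<longleftrightarrow>
     finite V \<and> (\<forall>S\<in>F. S \<subseteq> V) \<and> strict_po_on F prec \<and>
     (\<forall>S1 S2. prec S1 S2 \<longrightarrow> S1 \<in> F \<and> S2 \<in> F) \<and>
     \<comment> \<open>SE\<close>
     (\<exists>!S0. S0 \<in> F \<and> (\<forall>S\<in>F. S \<noteq> S0 \<longrightarrow> prec S0 S)) \<and>
     \<comment> \<open>SM\<close>
     (\<forall>S1\<in>F. \<forall>S2\<in>F. prec S1 S2 \<longrightarrow> card S1 < card S2) \<and>
     \<comment> \<open>SW\<close>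
     (\<forall>S\<in>F. \<forall>v\<in>S. \<forall>W1 W2. is_witness F prec S v W1 \<longrightarrow> is_witness F prec S v W2 \<longrightarrow> W1 = W2) \<and>
     \<comment> \<open>TE\<close>
     (\<forall>S1\<in>F. \<forall>S2\<in>F. \<forall>S3\<in>F. \<forall>v. prec S1 S2 \<longrightarrow> prec S2 S3 \<longrightarrow> v \<in> S1 - S2 \<longrightarrow> v \<in> S1 - S3) \<and>
     \<comment> \<open>LVS\<close>
     (\<forall>S\<in>F. \<forall>S'\<in>Pred F prec S. card S' \<le> card (Vis V F prec S)) \<and>
     \<comment> \<open>DVS\<close>
     (\<forall>S0. S0 \<in> F \<and> (\<forall>S\<in>F. S \<noteq> S0 \<longrightarrow> prec S0 S) \<longrightarrow>
        (\<forall>S\<in>F. S \<noteq> S0 \<longrightarrow> \<not> Vis V F prec S \<subseteq> S))"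

end

theory Submission
  imports Defs
begin

text \<open>Among the sets below \<open>S\<close> containing \<open>v\<close>, take \<open>S*\<close> of least cardinality; by (SM) and
transitivity no set below \<open>S*\<close> contains \<open>v\<close>, so \<open>v \<in> hat(S*)\<close>. If some \<open>S''\<close> with
\<open>S* \<prec> S'' \<prec> S\<close> dropped \<open>v\<close>, then \<open>S''\<close> lies below or equals an immediate predecessor \<open>P\<close>
of \<open>S\<close>, and by (TE) \<open>P\<close> covers \<open>v\<close>, contradicting \<open>v \<in> Vis(S)\<close>.\<close>

lemma IS_family_prec_in:
  assumes "IS_family V F prec" and "prec A B"
  shows "A \<in> F" and "B \<in> F"
proof -
  have "\<forall>S1 S2. prec S1 S2 \<longrightarrow> S1 \<in> F \<and> S2 \<in> F"
    using assms(1) unfolding IS_family_def by simp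
  then show "A \<in> F" and "B \<in> F" using assms(2) by blast+
qed

lemma IS_family_prec_trans:
  assumes "IS_family V F prec" and "prec A B" and "prec B C"
  shows "prec A C"
proof -
  have "strict_po_on F prec" using assms(1) unfolding IS_family_def by simp
  then show ?thesis
    using assms IS_family_prec_in unfolding strict_po_on_def by meson
qed

lemma IS_family_card_less:
  assumes "IS_family V F prec" and "prec A B"
  shows "card A < card B"
proof -
  have "\<forall>S1\<in>F. \<forall>S2\<in>F. prec S1 S2 \<longrightarrow> card S1 < card S2"
    using assms(1) unfolding IS_family_def by simp
  then show ?thesis using assms(2) IS_family_prec_in[OF assms] by blast
qed

lemma IS_family_removed_stays_removed:
  assumes "IS_family V F prec" and "prec A B" and "prec B C" and "v \<in> A - B"
  shows "v \<in> A - C"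
proof -
  have "\<forall>S1\<in>F. \<forall>S2\<in>F. \<forall>S3\<in>F. \<forall>v. prec S1 S2 \<longrightarrow> prec S2 S3 \<longrightarrow> v \<in> S1 - S2 \<longrightarrow> v \<in> S1 - S3"
    using assms(1) unfolding IS_family_def by simp
  then show ?thesis using assms IS_family_prec_in[OF assms(1)] by meson
qed

lemma IS_family_below_Pred:
  assumes fam: "IS_family V F prec" and "prec A S"
  obtains P where "P \<in> Pred F prec S" and "A = P \<or> prec A P"
proof -
  let ?between = "\<lambda>T. (A = T \<or> prec A T) \<and> prec T S"
  \<comment> \<open>a cardinality-maximal set between \<open>A\<close> and \<open>S\<close> is an immediate predecessor of \<open>S\<close>\<close>
  obtain P where P: "?between P" and max: "\<And>T. ?between T \<Longrightarrow> card T \<le> card P"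
    using ex_has_greatest_nat[of ?between A card "card S"] assms IS_family_card_less[OF fam]
    by (metis less_imp_le)
  have "\<not> (\<exists>T\<in>F. prec P T \<and> prec T S)"
  proof
    assume "\<exists>T\<in>F. prec P T \<and> prec T S"
    then obtain T where "prec P T" "prec T S" by blast
    then have "?between T" using P IS_family_prec_trans[OF fam] by blast
    with max IS_family_card_less[OF fam \<open>prec P T\<close>] show False by force
  qed
  then have "P \<in> Pred F prec S"
    using P IS_family_prec_in[OF fam] unfolding Pred_def by blast
  with P that show ?thesis by blast
qed

lemma IS_family_hat_of_card_minimal:
  assumes fam: "IS_family V F prec" and "prec T S" and "v \<in> T"
    and min: "\<And>T'. prec T' S \<Longrightarrow> v \<in> T' \<Longrightarrow> card T \<le> card T'"
  shows "v \<in> hat F prec T"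
proof -
  have "v \<notin> T'" if "prec T' T" for T'
  proof
    assume "v \<in> T'"
    moreover have "prec T' S" using that assms(2) IS_family_prec_trans[OF fam] by blast
    ultimately show False using min IS_family_card_less[OF fam that] by force
  qed
  then show ?thesis using \<open>v \<in> T\<close> unfolding hat_def by blast
qed

lemma IS_family_witness_if_uncovered:
  assumes fam: "IS_family V F prec" and "prec A S" and "v \<in> A - S"
    and uncovered: "\<And>P. P \<in> Pred F prec S \<Longrightarrow> \<not> covers F prec P v"
  shows "is_witness F prec A v S"
proof -
  have "\<not> (\<exists>S''\<in>F. prec A S'' \<and> v \<in> A - S'' \<and> prec S'' S)"
  proof
    assume "\<exists>S''\<in>F. prec A S'' \<and> v \<in> A - S'' \<and> prec S'' S"
    then obtain S'' where S'': "prec A S''" "v \<in> A - S''" "prec S'' S" by blast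
    obtain P where P: "P \<in> Pred F prec S" "S'' = P \<or> prec S'' P"
      using IS_family_below_Pred[OF fam S''(3)] by blast
    have "prec A P" using P(2) S''(1) IS_family_prec_trans[OF fam] by blast
    moreover have "v \<in> A - P"
      using P(2) S'' IS_family_removed_stays_removed[OF fam] by blast
    ultimately have "covers F prec P v"
      using IS_family_prec_in[OF fam] unfolding covers_def by blast
    with uncovered P(1) show False by blast
  qed
  then show ?thesis
    using assms(2,3) IS_family_prec_in[OF fam] unfolding is_witness_def by blast
qed

theorem proposition3:
  assumes "IS_family V F prec"
    and "S \<in> F"
    and "v \<in> Vis V F prec S - S"
  shows "\<exists>S'\<in>F. prec S' S \<and> v \<in> hat F prec S' \<and> is_witness F prec S' v S"
proof -
  from assms(3) obtain S1 where "S1 \<in> Pred F prec S" "v \<in> S1" "v \<notin> S"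
    and uncovered: "\<And>P. P \<in> Pred F prec S \<Longrightarrow> \<not> covers F prec P v"
    unfolding Vis_def by blast
  then have "prec S1 S" unfolding Pred_def by blast
  then obtain S' where S': "prec S' S \<and> v \<in> S'"
    and min: "\<And>T. prec T S \<and> v \<in> T \<Longrightarrow> card S' \<le> card T"
    using ex_has_least_nat[of "\<lambda>T. prec T S \<and> v \<in> T" S1 card] \<open>v \<in> S1\<close> by blast
  have "v \<in> hat F prec S'"
    using IS_family_hat_of_card_minimal[OF assms(1)] S' min by blast
  moreover have "is_witness F prec S' v S"
    using IS_family_witness_if_uncovered[OF assms(1)] S' \<open>v \<notin> S\<close> uncovered by blast
  ultimately show ?thesis using S' IS_family_prec_in[OF assms(1)] by blast
qed

end
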